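(* Let $G$ be a nilpotent group of class $5$. Then for all $g,h\in G$ and all $n\in\mathbb{N}$, $$g^n\wedge h = ([g,h]\wedge [g,g,g,h])^{\binom{n}{4}} ([g,h]\wedge [g,g,h])^{\binom{n}{3}} (g\wedge [g,g,g,g,h])^{\binom{n}{5}} (g\wedge [g,g,g,h])^{\binom{n}{4}} (g\wedge [g,g,h])^{\binom{n}{3}} (g\wedge [g,h])^{\binom{n}{2}} (g\wedge h)^n$$ in the exterior square $G\wedge G$.
   Context: Conventions: ${}^g h = ghg^{-1}$, $[g,h]=ghg^{-1}h^{-1}$, and commutators are right normed: $[a,b,c]=[a,[b,c]]$, $[a,b,c,d]=[a,[b,[c,d]]]$, etc. $\binom{n}{r}=0$ if $r>n$. The nonabelian tensor square $G\otimes G$ is generated by symbols $g\otimes h$ subject to $gg'\otimes h=({}^g g'\otimes {}^g h)(g\otimes h)$ and $g\otimes hh'=(g\otimes h)({}^h g\otimes {}^h h')$; the exterior square $G\wedge G$ is its quotient by the subgroup generated by all $x\otimes x$, and $g\wedge h$ denotes the image of $g\otimes h$. *)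

theory Defs
  imports "HOL-Algebra.Algebra"
begin

definition gconj :: "('a, 'b) monoid_scheme \<Rightarrow> 'a \<Rightarrow> 'a \<Rightarrow> 'a" where
  "gconj G g h = g \<otimes>\<^bsub>G\<^esub> h \<otimes>\<^bsub>G\<^esub> inv\<^bsub>G\<^esub> g"

definition gcomm :: "('a, 'b) monoid_scheme \<Rightarrow> 'a \<Rightarrow> 'a \<Rightarrow> 'a" where
  "gcomm G g h = g \<otimes>\<^bsub>G\<^esub> h \<otimes>\<^bsub>G\<^esub> inv\<^bsub>G\<^esub> g \<otimes>\<^bsub>G\<^esub> inv\<^bsub>G\<^esub> h"

text \<open>Lower central series: gamma_1 = G (index 0 here), gamma_{i+1} = [G, gamma_i].\<close>

primrec lower_central :: "('a, 'b) monoid_scheme \<Rightarrow> nat \<Rightarrow> 'a set" where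
  "lower_central G 0 = carrier G"
| "lower_central G (Suc i) =
     generate G {gcomm G x y | x y. x \<in> carrier G \<and> y \<in> lower_central G i}"

definition nilpotent_of_class :: "('a, 'b) monoid_scheme \<Rightarrow> nat \<Rightarrow> bool" where
  "nilpotent_of_class G c \<longleftrightarrow>
     lower_central G c = {\<one>\<^bsub>G\<^esub>} \<and> (\<forall>d<c. lower_central G d \<noteq> {\<one>\<^bsub>G\<^esub>})"

text \<open>Words are lists of letters
  (g, h, b): (g, h, True) stands for the generator g \<wedge> h, (g, h, False) for its inverse.
  ext_rel G is the congruence on words generated by free cancellation and the defining
  relations of the tensor square together with x \<wedge> x = 1.\<close>

inductive ext_rel :: "('a, 'b) monoid_scheme \<Rightarrow> ('a \<times> 'a \<times> bool) list \<Rightarrow> ('a \<times> 'a \<times> bool) list \<Rightarrow> bool"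
  for G where
  refl: "ext_rel G w w"
| sym: "ext_rel G u v \<Longrightarrow> ext_rel G v u"
| trans: "ext_rel G u v \<Longrightarrow> ext_rel G v w \<Longrightarrow> ext_rel G u w"
| cong: "ext_rel G u v \<Longrightarrow> ext_rel G (a @ u @ c) (a @ v @ c)"
| cancel: "ext_rel G [(x, y, b), (x, y, \<not> b)] []"
| rel_left: "\<lbrakk>g \<in> carrier G; g' \<in> carrier G; h \<in> carrier G\<rbrakk> \<Longrightarrow>
    ext_rel G [(g \<otimes>\<^bsub>G\<^esub> g', h, True)] [(gconj G g g', gconj G g h, True), (g, h, True)]"
| rel_right: "\<lbrakk>g \<in> carrier G; h \<in> carrier G; h' \<in> carrier G\<rbrakk> \<Longrightarrow>
    ext_rel G [(g, h \<otimes>\<^bsub>G\<^esub> h', True)] [(g, h, True), (gconj G h g, gconj G h h', True)]"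
| rel_diag: "x \<in> carrier G \<Longrightarrow> ext_rel G [(x, x, True)] []"

definition exterior_square :: "('a, 'b) monoid_scheme \<Rightarrow> ('a \<times> 'a \<times> bool) list set monoid" where
  "exterior_square G =
     \<lparr> carrier = (\<lambda>w. Collect (ext_rel G w)) ` lists (carrier G \<times> carrier G \<times> UNIV),
       monoid.mult = (\<lambda>A B. {w. \<exists>u\<in>A. \<exists>v\<in>B. ext_rel G w (u @ v)}),
       monoid.one = Collect (ext_rel G []) \<rparr>"

definition wedge :: "('a, 'b) monoid_scheme \<Rightarrow> 'a \<Rightarrow> 'a \<Rightarrow> ('a \<times> 'a \<times> bool) list set" where
  "wedge G g h = Collect (ext_rel G [(g, h, True)])"

end

theory Submission
  imports Defs
begin

text \<open>
  By the defining relation \<open>gg' \<wedge> h = \<^sup>g(g' \<wedge> h) (g \<wedge> h)\<close>, the element \<open>g\<^sup>n \<wedge> h\<close> is the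
  twisted power \<open>\<^sup>g\<^sup>n\<^sup>-\<^sup>1x \<cdots> \<^sup>gx x\<close> of \<open>x = g \<wedge> h\<close>. Put \<open>c\<^sub>0 = h\<close>, \<open>c\<^sub>k\<^sub>+\<^sub>1 = [g, c\<^sub>k]\<close> and
  \<open>x\<^sub>k = g \<wedge> c\<^sub>k\<close>; then \<open>\<^sup>gx\<^sub>k = x\<^sub>k\<^sub>+\<^sub>1 x\<^sub>k\<close>, and the crossed module identity
  \<open>[a \<wedge> b, c \<wedge> d] = [a, b] \<wedge> [c, d]\<close> gives \<open>[x\<^sub>0, x\<^sub>1] = c\<^sub>1 \<wedge> c\<^sub>2\<close>, \<open>[x\<^sub>0, x\<^sub>2] = c\<^sub>1 \<wedge> c\<^sub>3\<close> and
  \<open>[x\<^sub>1, x\<^sub>2] = c\<^sub>2 \<wedge> c\<^sub>3\<close>. In class 5 the three subgroup lemma makes \<open>c\<^sub>4\<close> and \<open>[c\<^sub>1, c\<^sub>2]\<close>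
  central and kills \<open>[g, c\<^sub>4]\<close> and \<open>[c\<^sub>1, c\<^sub>3]\<close>. Hence \<open>x\<^sub>3\<close>, \<open>x\<^sub>4\<close>, \<open>c\<^sub>1 \<wedge> c\<^sub>2\<close>, \<open>c\<^sub>1 \<wedge> c\<^sub>3\<close> are
  central in \<open>G \<wedge> G\<close>, \<open>c\<^sub>2 \<wedge> c\<^sub>3 = 1\<close>, and the twisted power expands by induction on \<open>n\<close>
  with Pascal's rule.
\<close>

section \<open>Commutators and the upper central series\<close>

definition center :: "('a, 'b) monoid_scheme \<Rightarrow> 'a set" where
  "center G = {z \<in> carrier G. \<forall>y\<in>carrier G. y \<otimes>\<^bsub>G\<^esub> z = z \<otimes>\<^bsub>G\<^esub> y}"

primrec upper_central :: "('a, 'b) monoid_scheme \<Rightarrow> nat \<Rightarrow> 'a set" where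
  "upper_central G 0 = {\<one>\<^bsub>G\<^esub>}"
| "upper_central G (Suc k) =
     {z \<in> carrier G. \<forall>y\<in>carrier G. gcomm G y z \<in> upper_central G k}"

declare upper_central.simps(2) [simp del]

lemma mem_upper_central_Suc:
  "z \<in> upper_central G (Suc k) \<longleftrightarrow>
     z \<in> carrier G \<and> (\<forall>y\<in>carrier G. gcomm G y z \<in> upper_central G k)"
  by (simp add: upper_central.simps(2))

context group
begin

lemma mult_inv_cancel_left [simp]: "x \<in> carrier G \<Longrightarrow> y \<in> carrier G \<Longrightarrow> x \<otimes> (inv x \<otimes> y) = y"
  by (simp add: m_assoc [symmetric])

lemma inv_mult_cancel_left [simp]: "x \<in> carrier G \<Longrightarrow> y \<in> carrier G \<Longrightarrow> inv x \<otimes> (x \<otimes> y) = y"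
  by (simp add: m_assoc [symmetric])

lemma inv_equality_right: "x \<otimes> y = \<one> \<Longrightarrow> x \<in> carrier G \<Longrightarrow> y \<in> carrier G \<Longrightarrow> inv x = y"
  by (simp add: inv_char inv_comm)

lemma gcomm_closed [simp]: "x \<in> carrier G \<Longrightarrow> y \<in> carrier G \<Longrightarrow> gcomm G x y \<in> carrier G"
  by (simp add: gcomm_def)

lemma gconj_closed [simp]: "x \<in> carrier G \<Longrightarrow> y \<in> carrier G \<Longrightarrow> gconj G x y \<in> carrier G"
  by (simp add: gconj_def)

lemmas group_word_simps = gcomm_def gconj_def m_assoc inv_mult_group

lemma gcomm_eq_one_iff:
  "x \<in> carrier G \<Longrightarrow> y \<in> carrier G \<Longrightarrow> gcomm G x y = \<one> \<longleftrightarrow> x \<otimes> y = y \<otimes> x"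
proof -
  assume "x \<in> carrier G" "y \<in> carrier G"
  moreover have "gcomm G x y = (x \<otimes> y) \<otimes> inv (y \<otimes> x)"
    using calculation by (simp add: group_word_simps)
  ultimately show ?thesis by (simp add: inv_solve_right')
qed

lemma mult_eq_gcomm_mult: "a \<in> carrier G \<Longrightarrow> b \<in> carrier G \<Longrightarrow> a \<otimes> b = gcomm G a b \<otimes> (b \<otimes> a)"
  by (simp add: group_word_simps)

lemma gcomm_eq_iff:
  "a \<in> carrier G \<Longrightarrow> b \<in> carrier G \<Longrightarrow> c \<in> carrier G \<Longrightarrow>
    gcomm G a b = c \<longleftrightarrow> a \<otimes> b = c \<otimes> (b \<otimes> a)"
proof -
  assume "a \<in> carrier G" "b \<in> carrier G" "c \<in> carrier G"
  moreover have "gcomm G a b = (a \<otimes> b) \<otimes> inv (b \<otimes> a)"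
    using calculation by (simp add: group_word_simps)
  ultimately show ?thesis by (simp add: inv_solve_right')
qed

lemma gcomm_swap: "a \<in> carrier G \<Longrightarrow> b \<in> carrier G \<Longrightarrow> gcomm G b a = inv (gcomm G a b)"
  by (simp add: group_word_simps)

lemma gcomm_mult_right:
  "y \<in> carrier G \<Longrightarrow> a \<in> carrier G \<Longrightarrow> b \<in> carrier G \<Longrightarrow>
    gcomm G y (a \<otimes> b) = gcomm G y a \<otimes> gconj G a (gcomm G y b)"
  by (simp add: group_word_simps)

lemma gcomm_inv_right:
  "y \<in> carrier G \<Longrightarrow> a \<in> carrier G \<Longrightarrow> gcomm G y (inv a) = gconj G (inv a) (inv (gcomm G y a))"
  by (simp add: group_word_simps)

lemma gcomm_gconj_right:
  "y \<in> carrier G \<Longrightarrow> u \<in> carrier G \<Longrightarrow> z \<in> carrier G \<Longrightarrow>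
    gcomm G y (gconj G u z) = gconj G u (gcomm G (gconj G (inv u) y) z)"
  by (simp add: group_word_simps)

lemma gconj_mult: "x \<in> carrier G \<Longrightarrow> a \<in> carrier G \<Longrightarrow> b \<in> carrier G \<Longrightarrow>
    gconj G x (a \<otimes> b) = gconj G x a \<otimes> gconj G x b"
  by (simp add: group_word_simps)

lemma gconj_gconj: "x \<in> carrier G \<Longrightarrow> y \<in> carrier G \<Longrightarrow> a \<in> carrier G \<Longrightarrow>
    gconj G x (gconj G y a) = gconj G (x \<otimes> y) a"
  by (simp add: group_word_simps)

lemma gconj_distrib_gconj: "x \<in> carrier G \<Longrightarrow> a \<in> carrier G \<Longrightarrow> b \<in> carrier G \<Longrightarrow>
    gconj G x (gconj G a b) = gconj G (gconj G x a) (gconj G x b)"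
  by (simp add: group_word_simps)

lemma gconj_gconj_inv: "y \<in> carrier G \<Longrightarrow> z \<in> carrier G \<Longrightarrow> gconj G y (gconj G (inv y) z) = z"
  by (simp add: group_word_simps)

lemma hall_witt:
  assumes "a \<in> carrier G" "b \<in> carrier G" "c \<in> carrier G"
  shows "gcomm G (gcomm G a b) (gconj G b c) \<otimes> gcomm G (gcomm G b c) (gconj G c a)
     \<otimes> gcomm G (gcomm G c a) (gconj G a b) = \<one>"
  using assms by (simp add: group_word_simps)

lemma upper_central_normal: "upper_central G k \<lhd> G"
proof (induction k)
  case 0
  then show ?case by (simp add: one_is_normal)
next
  case (Suc k)
  interpret N: normal "upper_central G k" G by (fact Suc)
  have conj_closed: "gconj G x a \<in> upper_central G k"
    if "x \<in> carrier G" "a \<in> upper_central G k" for x a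
    using that by (simp add: gconj_def N.inv_op_closed2)
  show ?case
    unfolding normal_inv_iff
  proof (intro conjI ballI subgroupI)
    show "upper_central G (Suc k) \<subseteq> carrier G"
      by (auto simp: mem_upper_central_Suc)
    have "\<one> \<in> upper_central G (Suc k)"
      by (simp add: mem_upper_central_Suc gcomm_def)
    then show "upper_central G (Suc k) \<noteq> {}"
      by blast
  next
    fix a b assume "a \<in> upper_central G (Suc k)" "b \<in> upper_central G (Suc k)"
    then show "a \<otimes> b \<in> upper_central G (Suc k)"
      by (auto simp: mem_upper_central_Suc gcomm_mult_right intro!: conj_closed)
  next
    fix a assume "a \<in> upper_central G (Suc k)"
    then show "inv a \<in> upper_central G (Suc k)"
      by (auto simp: mem_upper_central_Suc gcomm_inv_right intro!: conj_closed)
  next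
    fix x a assume "x \<in> carrier G" "a \<in> upper_central G (Suc k)"
    then show "x \<otimes> a \<otimes> inv x \<in> upper_central G (Suc k)"
      by (auto simp: mem_upper_central_Suc gcomm_gconj_right gconj_def [symmetric]
          intro!: conj_closed)
  qed
qed

lemma gconj_upper_central:
  "x \<in> carrier G \<Longrightarrow> a \<in> upper_central G k \<Longrightarrow> gconj G x a \<in> upper_central G k"
  unfolding gconj_def by (rule normal.inv_op_closed2[OF upper_central_normal])

lemma upper_central_subset_carrier: "upper_central G k \<subseteq> carrier G"
  using normal_imp_subgroup[OF upper_central_normal] subgroup.subset by blast

lemma upper_central_1: "upper_central G 1 = center G"
  by (auto simp: mem_upper_central_Suc center_def gcomm_eq_one_iff)

lemma center_subgroup: "subgroup (center G) G"
  unfolding upper_central_1 [symmetric] by (rule normal_imp_subgroup[OF upper_central_normal])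

lemma one_in_center: "\<one> \<in> center G"
  by (rule subgroup.one_closed[OF center_subgroup])

lemma center_closed: "z \<in> center G \<Longrightarrow> z \<in> carrier G"
  by (simp add: center_def)

lemma center_commute: "z \<in> center G \<Longrightarrow> y \<in> carrier G \<Longrightarrow> y \<otimes> z = z \<otimes> y"
  by (simp add: center_def)

lemma center_left_commute:
  "z \<in> center G \<Longrightarrow> y \<in> carrier G \<Longrightarrow> w \<in> carrier G \<Longrightarrow> y \<otimes> (z \<otimes> w) = z \<otimes> (y \<otimes> w)"
  by (metis center_closed center_commute m_assoc)

lemma center_mult: "a \<in> center G \<Longrightarrow> b \<in> center G \<Longrightarrow> a \<otimes> b \<in> center G"
  by (rule subgroup.m_closed[OF center_subgroup])

lemma center_inv: "z \<in> center G \<Longrightarrow> inv z \<in> center G"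
  by (rule subgroup.m_inv_closed[OF center_subgroup])

lemma center_nat_pow: "z \<in> center G \<Longrightarrow> z [^] (n::nat) \<in> center G"
  by (induction n) (simp_all add: one_in_center center_mult)

lemma gconj_center: "z \<in> center G \<Longrightarrow> y \<in> carrier G \<Longrightarrow> gconj G z y = y"
  by (simp add: gconj_def center_commute [symmetric] center_closed m_assoc)

lemma upper_central_gcomm_left:
  "a \<in> upper_central G (Suc k) \<Longrightarrow> y \<in> carrier G \<Longrightarrow> gcomm G a y \<in> upper_central G k"
  using subgroup.m_inv_closed[OF normal_imp_subgroup[OF upper_central_normal]]
  by (auto simp: mem_upper_central_Suc gcomm_swap[of y a])

text \<open>An elementwise three subgroup lemma: \<open>[\<gamma>\<^sub>2 G, Z\<^sub>k\<^sub>+\<^sub>2 G] \<subseteq> Z\<^sub>k G\<close>, via the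
  Hall--Witt identity.\<close>

lemma gcomm_gcomm_upper_central:
  assumes z: "z \<in> upper_central G (Suc (Suc k))" and x: "x \<in> carrier G" and y: "y \<in> carrier G"
  shows "gcomm G (gcomm G x y) z \<in> upper_central G k"
proof -
  define c where "c = gconj G (inv y) z"
  have c: "c \<in> upper_central G (Suc (Suc k))"
    unfolding c_def using y z by (intro gconj_upper_central) simp_all
  have z_carrier: "z \<in> carrier G" and c_carrier: "c \<in> carrier G"
    using z c upper_central_subset_carrier by blast+
  have yc: "gconj G y c = z"
    using y z_carrier by (simp add: c_def gconj_gconj_inv)
  define t2 where "t2 = gcomm G (gcomm G y c) (gconj G c x)"
  define t3 where "t3 = gcomm G (gcomm G c x) (gconj G x y)"
  have "gcomm G y c \<in> upper_central G (Suc k)"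
    using c y by (simp add: mem_upper_central_Suc)
  then have t2: "t2 \<in> upper_central G k"
    unfolding t2_def using c_carrier x by (simp add: upper_central_gcomm_left)
  have "gcomm G c x \<in> upper_central G (Suc k)"
    using c x by (rule upper_central_gcomm_left)
  then have t3: "t3 \<in> upper_central G k"
    unfolding t3_def using x y by (simp add: upper_central_gcomm_left)
  have t_carrier: "t2 \<in> carrier G" "t3 \<in> carrier G"
    using t2 t3 upper_central_subset_carrier by blast+
  have "gcomm G (gcomm G x y) z \<otimes> (t2 \<otimes> t3) = \<one>"
    using hall_witt[OF x y c_carrier] x y z_carrier c_carrier
    by (simp add: yc t2_def t3_def m_assoc)
  then have "gcomm G (gcomm G x y) z = inv (t2 \<otimes> t3)"
    using x y z_carrier t_carrier by (intro inv_equality [symmetric]) auto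
  then show ?thesis
    using t2 t3 normal_imp_subgroup[OF upper_central_normal]
    by (simp add: subgroup.m_closed subgroup.m_inv_closed)
qed

lemma lower_central_subset_carrier: "lower_central G i \<subseteq> carrier G"
proof (induction i)
  case (Suc i)
  then show ?case by (auto intro!: generate_incl)
qed simp

lemma gcomm_in_lower_central:
  "x \<in> carrier G \<Longrightarrow> y \<in> lower_central G i \<Longrightarrow> gcomm G x y \<in> lower_central G (Suc i)"
  by (auto intro: generate.incl)

lemma lower_central_subset_upper_central:
  "lower_central G (i + k) = {\<one>} \<Longrightarrow> lower_central G i \<subseteq> upper_central G k"
proof (induction k arbitrary: i)
  case 0
  then show ?case by simp
next
  case (Suc k)
  have "gcomm G x y \<in> upper_central G k" if "x \<in> carrier G" "y \<in> lower_central G i" for x y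
    using Suc.IH[of "Suc i"] Suc.prems gcomm_in_lower_central[OF that] by auto
  then show ?case
    using lower_central_subset_carrier[of i] by (auto simp: mem_upper_central_Suc)
qed

lemma nat_pow_mult_gcomm_center:
  assumes a: "a \<in> carrier G" and b: "b \<in> carrier G" and z: "gcomm G a b \<in> center G"
  shows "a [^] (k::nat) \<otimes> b = gcomm G a b [^] k \<otimes> (b \<otimes> a [^] k)"
proof (induction k)
  case 0
  then show ?case using b by simp
next
  case (Suc k)
  let ?z = "gcomm G a b"
  have zc: "?z \<in> carrier G" using a b by simp
  have "a [^] Suc k \<otimes> b = a [^] k \<otimes> (?z \<otimes> (b \<otimes> a))"
    using a b by (simp add: m_assoc mult_eq_gcomm_mult [of a b])
  also have "\<dots> = ?z \<otimes> (a [^] k \<otimes> b) \<otimes> a"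
    using a b zc z by (simp add: center_left_commute m_assoc)
  also have "\<dots> = ?z [^] Suc k \<otimes> (b \<otimes> a [^] Suc k)"
    unfolding nat_pow_Suc2 [OF zc] using a b zc by (simp add: Suc.IH m_assoc)
  finally show ?case .
qed

lemma pow_mult_gcomm_center:
  assumes a: "a \<in> carrier G" and b: "b \<in> carrier G" and z: "gcomm G a b \<in> center G"
  shows "(b \<otimes> a) [^] k = gcomm G a b [^] (k choose 2) \<otimes> (b [^] k \<otimes> a [^] k)"
proof (induction k)
  case 0
  then show ?case by (simp add: numeral_2_eq_2)
next
  case (Suc k)
  let ?z = "gcomm G a b"
  have zc: "?z \<in> carrier G" using a b by simp
  have "(b \<otimes> a) [^] Suc k = ?z [^] (k choose 2) \<otimes> (b [^] k \<otimes> (a [^] k \<otimes> b \<otimes> a))"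
    using a b by (simp add: Suc.IH m_assoc)
  also have "\<dots> = ?z [^] (k choose 2) \<otimes> (b [^] k \<otimes> (?z [^] k \<otimes> (b \<otimes> a [^] Suc k)))"
    using a b zc z by (simp add: nat_pow_mult_gcomm_center m_assoc nat_pow_Suc2)
  also have "\<dots> = ?z [^] (k choose 2) \<otimes> ?z [^] k \<otimes> (b [^] Suc k \<otimes> a [^] Suc k)"
    using a b zc center_left_commute[OF center_nat_pow[OF z, where n = k], of "b [^] k"]
    by (simp add: m_assoc)
  also have "\<dots> = ?z [^] (Suc k choose 2) \<otimes> (b [^] Suc k \<otimes> a [^] Suc k)"
    using zc by (simp add: nat_pow_mult numeral_2_eq_2 add.commute)
  finally show ?case .
qed

end

lemma (in group_hom) hom_gcomm:
  "a \<in> carrier G \<Longrightarrow> b \<in> carrier G \<Longrightarrow> h (gcomm G a b) = gcomm H (h a) (h b)"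
  by (simp add: gcomm_def)

lemma (in group) subgroup_twisted_centralizer:
  assumes "group_hom G G \<phi>" and s: "s \<in> carrier G"
  shows "subgroup {t \<in> carrier G. s \<otimes> t = \<phi> t \<otimes> s} G"
proof -
  interpret \<phi>: group_hom G G \<phi> by fact
  show ?thesis
  proof (rule subgroupI)
    show "{t \<in> carrier G. s \<otimes> t = \<phi> t \<otimes> s} \<noteq> {}"
      using s by (auto intro!: exI[of _ \<one>])
  next
    fix t assume "t \<in> {t \<in> carrier G. s \<otimes> t = \<phi> t \<otimes> s}"
    then have t: "t \<in> carrier G" and st: "s \<otimes> t = \<phi> t \<otimes> s" by auto
    have "s \<otimes> inv t = inv (\<phi> t) \<otimes> (\<phi> t \<otimes> s) \<otimes> inv t"
      using s t by (simp add: m_assoc)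
    also have "\<dots> = inv (\<phi> t) \<otimes> s"
      using s t by (simp add: st [symmetric] m_assoc)
    finally show "inv t \<in> {t \<in> carrier G. s \<otimes> t = \<phi> t \<otimes> s}"
      using t by simp
  next
    fix a b assume "a \<in> {t \<in> carrier G. s \<otimes> t = \<phi> t \<otimes> s}" "b \<in> {t \<in> carrier G. s \<otimes> t = \<phi> t \<otimes> s}"
    then have ab: "a \<in> carrier G" "b \<in> carrier G" and "s \<otimes> a = \<phi> a \<otimes> s" "s \<otimes> b = \<phi> b \<otimes> s"
      by auto
    then have "s \<otimes> (a \<otimes> b) = \<phi> (a \<otimes> b) \<otimes> s"
      using s by (simp add: m_assoc [symmetric]) (simp add: m_assoc)
    then show "a \<otimes> b \<in> {t \<in> carrier G. s \<otimes> t = \<phi> t \<otimes> s}"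
      using ab by simp
  qed auto
qed

section \<open>A twisted binomial formula\<close>

primrec twisted_pow :: "('a, 'b) monoid_scheme \<Rightarrow> ('a \<Rightarrow> 'a) \<Rightarrow> 'a \<Rightarrow> nat \<Rightarrow> 'a" where
  "twisted_pow G \<phi> x 0 = \<one>\<^bsub>G\<^esub>"
| "twisted_pow G \<phi> x (Suc n) = \<phi> (twisted_pow G \<phi> x n) \<otimes>\<^bsub>G\<^esub> x"

text \<open>In the application \<open>\<phi>\<close> is the action of \<open>g\<close> on \<open>G \<wedge> G\<close>, \<open>x\<^sub>k = g \<wedge> c\<^sub>k\<close>,
  \<open>z\<^sub>1 = c\<^sub>1 \<wedge> c\<^sub>2\<close> and \<open>z\<^sub>2 = c\<^sub>1 \<wedge> c\<^sub>3\<close>.\<close>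

locale twisted_binomial = group_hom G G \<phi> for G (structure) and \<phi> +
  fixes x0 x1 x2 x3 x4 z1 z2 :: 'a
  assumes x_closed: "x0 \<in> carrier G" "x1 \<in> carrier G" "x2 \<in> carrier G"
    and x_center: "x3 \<in> center G" "x4 \<in> center G"
    and z_center: "z1 \<in> center G" "z2 \<in> center G"
    and \<phi>_x0: "\<phi> x0 = x1 \<otimes> x0" and \<phi>_x1: "\<phi> x1 = x2 \<otimes> x1" and \<phi>_x2: "\<phi> x2 = x3 \<otimes> x2"
    and \<phi>_x3: "\<phi> x3 = x4 \<otimes> x3" and \<phi>_x4: "\<phi> x4 = x4"
    and gcomm_x0_x1: "gcomm G x0 x1 = z1" and gcomm_x0_x2: "gcomm G x0 x2 = z2"
    and gcomm_x1_x2: "gcomm G x1 x2 = \<one>"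
begin

lemma elements_closed [simp]:
  "x0 \<in> carrier G" "x1 \<in> carrier G" "x2 \<in> carrier G" "x3 \<in> carrier G" "x4 \<in> carrier G"
  "z1 \<in> carrier G" "z2 \<in> carrier G"
  using x_closed x_center z_center center_closed by auto

lemma x0_x1_commute: "w \<in> carrier G \<Longrightarrow> x0 \<otimes> (x1 \<otimes> w) = z1 \<otimes> (x1 \<otimes> (x0 \<otimes> w))"
  using mult_eq_gcomm_mult[of x0 x1] by (simp add: gcomm_x0_x1 m_assoc [symmetric])

lemma x0_x2_commute: "w \<in> carrier G \<Longrightarrow> x0 \<otimes> (x2 \<otimes> w) = z2 \<otimes> (x2 \<otimes> (x0 \<otimes> w))"
  using mult_eq_gcomm_mult[of x0 x2] by (simp add: gcomm_x0_x2 m_assoc [symmetric])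

lemma x1_x2_commute: "w \<in> carrier G \<Longrightarrow> x1 \<otimes> (x2 \<otimes> w) = x2 \<otimes> (x1 \<otimes> w)"
  using gcomm_x1_x2 by (simp add: gcomm_eq_one_iff m_assoc [symmetric])

lemma \<phi>_z1: "\<phi> z1 = z1 \<otimes> z2"
proof -
  have "x1 \<otimes> x0 \<otimes> (x2 \<otimes> x1) = x1 \<otimes> (z2 \<otimes> (x2 \<otimes> (x0 \<otimes> x1)))"
    by (simp add: m_assoc x0_x2_commute)
  also have "\<dots> = z2 \<otimes> (x1 \<otimes> (x2 \<otimes> (z1 \<otimes> (x1 \<otimes> x0))))"
    by (simp add: x0_x1_commute [of \<one>, simplified] center_left_commute [OF z_center(2)])
  also have "\<dots> = z2 \<otimes> (z1 \<otimes> (x2 \<otimes> (x1 \<otimes> (x1 \<otimes> x0))))"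
    by (simp add: x1_x2_commute center_left_commute [OF z_center(1)])
  also have "\<dots> = z1 \<otimes> z2 \<otimes> (x2 \<otimes> x1 \<otimes> (x1 \<otimes> x0))"
    by (simp add: m_assoc center_left_commute [OF z_center(1), of z2])
  finally have "gcomm G (x1 \<otimes> x0) (x2 \<otimes> x1) = z1 \<otimes> z2"
    by (simp add: gcomm_eq_iff)
  then show ?thesis
    by (simp flip: gcomm_x0_x1 add: hom_gcomm \<phi>_x0 \<phi>_x1)
qed

lemma \<phi>_z2: "\<phi> z2 = z2"
proof -
  have "x1 \<otimes> x0 \<otimes> (x3 \<otimes> x2) = x3 \<otimes> (x1 \<otimes> (z2 \<otimes> (x2 \<otimes> x0)))"
    by (simp add: m_assoc x0_x2_commute [of \<one>, simplified] center_left_commute [OF x_center(1)])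
  also have "\<dots> = z2 \<otimes> (x3 \<otimes> x2 \<otimes> (x1 \<otimes> x0))"
    by (simp add: m_assoc x1_x2_commute center_left_commute [OF z_center(2)])
  finally have "gcomm G (x1 \<otimes> x0) (x3 \<otimes> x2) = z2"
    by (simp add: gcomm_eq_iff)
  then show ?thesis
    by (simp flip: gcomm_x0_x2 add: hom_gcomm \<phi>_x0 \<phi>_x2)
qed

definition central_part :: "nat \<Rightarrow> 'a" where
  "central_part n =
     z2 [^] (n choose 4) \<otimes> z1 [^] (n choose 3) \<otimes> x4 [^] (n choose 5) \<otimes> x3 [^] (n choose 4)"

definition main_part :: "nat \<Rightarrow> 'a" where
  "main_part n = x2 [^] (n choose 3) \<otimes> x1 [^] (n choose 2) \<otimes> x0 [^] n"

lemma central_part_in_center: "central_part n \<in> center G"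
  using x_center z_center by (simp add: central_part_def center_mult center_nat_pow)

lemma main_part_closed [simp]: "main_part n \<in> carrier G"
  by (simp add: main_part_def)

lemma choose_Suc_numeral:
  "Suc n choose 2 = (n choose 2) + n" "Suc n choose 3 = (n choose 3) + (n choose 2)"
  "Suc n choose 4 = (n choose 4) + (n choose 3)" "Suc n choose 5 = (n choose 5) + (n choose 4)"
  by (simp_all add: eval_nat_numeral)

lemma \<phi>_main_part:
  "\<phi> (main_part n) \<otimes> x0 = x3 [^] (n choose 3) \<otimes> z1 [^] (n choose 2) \<otimes> main_part (Suc n)"
proof -
  let ?b2 = "n choose 2" and ?b3 = "n choose 3"
  have x3_x2: "x3 \<otimes> x2 = x2 \<otimes> x3"
    using center_commute [OF x_center(1), of x2] by simp
  have x2_x1: "x2 \<otimes> x1 = x1 \<otimes> x2"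
    using x1_x2_commute [of \<one>] by simp
  have "\<phi> (main_part n) = (x3 \<otimes> x2) [^] ?b3 \<otimes> (x2 \<otimes> x1) [^] ?b2 \<otimes> (x1 \<otimes> x0) [^] n"
    by (simp add: main_part_def hom_nat_pow \<phi>_x0 \<phi>_x1 \<phi>_x2)
  also have "\<dots> = x3 [^] ?b3 \<otimes> x2 [^] ?b3 \<otimes> (x2 [^] ?b2 \<otimes> x1 [^] ?b2)
      \<otimes> (z1 [^] ?b2 \<otimes> (x1 [^] n \<otimes> x0 [^] n))"
    using z_center
    by (simp add: pow_mult_distrib [OF x3_x2] pow_mult_distrib [OF x2_x1] pow_mult_gcomm_center
        gcomm_x0_x1)
  finally have "\<phi> (main_part n) \<otimes> x0
      = x3 [^] ?b3 \<otimes> (x2 [^] ?b3 \<otimes> (x2 [^] ?b2 \<otimes> (x1 [^] ?b2 \<otimes> (z1 [^] ?b2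
          \<otimes> (x1 [^] n \<otimes> (x0 [^] n \<otimes> x0))))))"
    by (simp add: m_assoc)
  also have "\<dots> = x3 [^] ?b3 \<otimes> (z1 [^] ?b2 \<otimes> (x2 [^] ?b3 \<otimes> (x2 [^] ?b2 \<otimes> (x1 [^] ?b2
          \<otimes> (x1 [^] n \<otimes> (x0 [^] n \<otimes> x0))))))"
    by (simp add: center_left_commute [OF center_nat_pow [OF z_center(1)]])
  also have "\<dots> = x3 [^] ?b3 \<otimes> z1 [^] ?b2 \<otimes> main_part (Suc n)"
    by (simp add: main_part_def choose_Suc_numeral m_assoc nat_pow_mult [symmetric])
  finally show ?thesis .
qed

lemma \<phi>_central_part:
  "\<phi> (central_part n) \<otimes> (x3 [^] (n choose 3) \<otimes> z1 [^] (n choose 2)) = central_part (Suc n)"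
proof -
  have z1_z2: "z1 \<otimes> z2 = z2 \<otimes> z1" and x4_x3: "x4 \<otimes> x3 = x3 \<otimes> x4"
    using center_commute [OF z_center(2), of z1] center_commute [OF x_center(2), of x3] by simp_all
  have "\<phi> (central_part n) = z2 [^] (n choose 4) \<otimes> (z1 [^] (n choose 3) \<otimes> z2 [^] (n choose 3))
      \<otimes> x4 [^] (n choose 5) \<otimes> (x4 [^] (n choose 4) \<otimes> x3 [^] (n choose 4))"
    by (simp add: central_part_def hom_nat_pow \<phi>_z1 \<phi>_z2 \<phi>_x3 \<phi>_x4
        pow_mult_distrib [OF z1_z2] pow_mult_distrib [OF x4_x3])
  then show ?thesis
    using x_center z_center
    by (simp add: central_part_def choose_Suc_numeral nat_pow_mult [symmetric] m_assoc
        center_commute center_left_commute center_nat_pow)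
qed

lemma twisted_pow_eq_central_main: "twisted_pow G \<phi> x0 n = central_part n \<otimes> main_part n"
proof (induction n)
  case 0
  then show ?case by (simp add: central_part_def main_part_def binomial_eq_0)
next
  case (Suc n)
  let ?c = "x3 [^] (n choose 3) \<otimes> z1 [^] (n choose 2)"
  have c: "central_part n \<in> carrier G" "?c \<in> carrier G"
    using central_part_in_center center_closed by simp_all
  have "twisted_pow G \<phi> x0 (Suc n) = \<phi> (central_part n) \<otimes> (\<phi> (main_part n) \<otimes> x0)"
    using c by (simp add: Suc.IH m_assoc)
  also have "\<dots> = \<phi> (central_part n) \<otimes> ?c \<otimes> main_part (Suc n)"
    using c by (simp add: \<phi>_main_part m_assoc)
  also have "\<dots> = central_part (Suc n) \<otimes> main_part (Suc n)"
    by (simp add: \<phi>_central_part)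
  finally show ?case .
qed

lemma twisted_pow_binomial:
  "twisted_pow G \<phi> x0 n =
     z2 [^] (n choose 4) \<otimes> z1 [^] (n choose 3) \<otimes> x4 [^] (n choose 5) \<otimes> x3 [^] (n choose 4)
     \<otimes> x2 [^] (n choose 3) \<otimes> x1 [^] (n choose 2) \<otimes> x0 [^] n"
  by (simp add: twisted_pow_eq_central_main central_part_def main_part_def m_assoc)

end

section \<open>The exterior square as a group with \<open>G\<close>-action\<close>

definition ext_class :: "('a, 'b) monoid_scheme \<Rightarrow> ('a \<times> 'a \<times> bool) list \<Rightarrow> ('a \<times> 'a \<times> bool) list set"
  where "ext_class G w = Collect (ext_rel G w)"

definition inv_word :: "('a \<times> 'a \<times> bool) list \<Rightarrow> ('a \<times> 'a \<times> bool) list"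
  where "inv_word w = rev (map (\<lambda>(a, b, t). (a, b, \<not> t)) w)"

definition conj_word ::
    "('a, 'b) monoid_scheme \<Rightarrow> 'a \<Rightarrow> ('a \<times> 'a \<times> bool) list \<Rightarrow> ('a \<times> 'a \<times> bool) list"
  where "conj_word G x w = map (\<lambda>(a, b, t). (gconj G x a, gconj G x b, t)) w"

definition ext_act ::
    "('a, 'b) monoid_scheme \<Rightarrow> 'a \<Rightarrow> ('a \<times> 'a \<times> bool) list set \<Rightarrow> ('a \<times> 'a \<times> bool) list set"
  where "ext_act G x A = {v. \<exists>u\<in>A. ext_rel G v (conj_word G x u)}"

lemma ext_rel_append: "ext_rel G u v \<Longrightarrow> ext_rel G u' v' \<Longrightarrow> ext_rel G (u @ u') (v @ v')"
  using ext_rel.cong[of G u v "[]" u'] ext_rel.cong[of G u' v' v "[]"]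
  by (auto intro: ext_rel.trans)

lemma ext_class_eq_iff: "ext_class G u = ext_class G v \<longleftrightarrow> ext_rel G u v"
proof
  assume "ext_class G u = ext_class G v"
  then show "ext_rel G u v"
    by (auto simp: ext_class_def intro: ext_rel.refl)
next
  assume "ext_rel G u v"
  then show "ext_class G u = ext_class G v"
    by (auto simp: ext_class_def intro: ext_rel.trans ext_rel.sym)
qed

lemma ext_class_mult:
  "ext_class G u \<otimes>\<^bsub>exterior_square G\<^esub> ext_class G v = ext_class G (u @ v)"
  unfolding exterior_square_def ext_class_def
  by (auto intro: ext_rel.refl ext_rel.sym ext_rel.trans ext_rel_append)

lemma one_exterior_square: "\<one>\<^bsub>exterior_square G\<^esub> = ext_class G []"
  by (simp add: exterior_square_def ext_class_def)

lemma carrier_exterior_square: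
  "carrier (exterior_square G) = ext_class G ` lists (carrier G \<times> carrier G \<times> UNIV)"
  by (simp add: exterior_square_def ext_class_def [abs_def])

lemma ext_rel_inv_word: "ext_rel G (inv_word w @ w) []"
proof (induction w rule: rev_induct)
  case Nil
  then show ?case by (simp add: inv_word_def ext_rel.refl)
next
  case (snoc l w)
  obtain a b t where l: "l = (a, b, t)" by (cases l)
  have "ext_rel G ([(a, b, \<not> t)] @ (inv_word w @ w) @ [l]) ([(a, b, \<not> t)] @ [] @ [l])"
    by (rule ext_rel.cong[OF snoc])
  moreover have "ext_rel G [(a, b, \<not> t), (a, b, \<not> \<not> t)] []"
    by (rule ext_rel.cancel)
  ultimately show ?case
    by (auto simp: inv_word_def l intro: ext_rel.trans)
qed

lemma inv_word_in_lists: "u \<in> lists (A \<times> B \<times> UNIV) \<Longrightarrow> inv_word u \<in> lists (A \<times> B \<times> UNIV)"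
  by (auto simp: inv_word_def)

lemma group_exterior_square: "group (exterior_square G)"
proof (rule groupI)
  fix x y assume "x \<in> carrier (exterior_square G)" "y \<in> carrier (exterior_square G)"
  then obtain u v where "u \<in> lists (carrier G \<times> carrier G \<times> UNIV)" "x = ext_class G u"
    and "v \<in> lists (carrier G \<times> carrier G \<times> UNIV)" "y = ext_class G v"
    by (auto simp only: carrier_exterior_square)
  then show "x \<otimes>\<^bsub>exterior_square G\<^esub> y \<in> carrier (exterior_square G)"
    by (simp add: carrier_exterior_square ext_class_mult)
next
  fix x y z assume "x \<in> carrier (exterior_square G)" "y \<in> carrier (exterior_square G)"
    "z \<in> carrier (exterior_square G)"
  then show "x \<otimes>\<^bsub>exterior_square G\<^esub> y \<otimes>\<^bsub>exterior_square G\<^esub> z =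
      x \<otimes>\<^bsub>exterior_square G\<^esub> (y \<otimes>\<^bsub>exterior_square G\<^esub> z)"
    by (auto simp only: carrier_exterior_square ext_class_mult append_assoc)
next
  show "\<one>\<^bsub>exterior_square G\<^esub> \<in> carrier (exterior_square G)"
    by (simp add: carrier_exterior_square one_exterior_square)
next
  fix x assume "x \<in> carrier (exterior_square G)"
  then obtain u where u: "u \<in> lists (carrier G \<times> carrier G \<times> UNIV)" "x = ext_class G u"
    by (auto simp only: carrier_exterior_square)
  then show "\<one>\<^bsub>exterior_square G\<^esub> \<otimes>\<^bsub>exterior_square G\<^esub> x = x"
    by (simp add: one_exterior_square ext_class_mult)
  from u have "ext_class G (inv_word u) \<in> carrier (exterior_square G)"
    by (simp add: carrier_exterior_square inv_word_in_lists)
  moreover have "ext_class G (inv_word u) \<otimes>\<^bsub>exterior_square G\<^esub> x = \<one>\<^bsub>exterior_square G\<^esub>"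
    using u ext_rel_inv_word by (simp add: ext_class_mult one_exterior_square ext_class_eq_iff)
  ultimately show "\<exists>y\<in>carrier (exterior_square G). y \<otimes>\<^bsub>exterior_square G\<^esub> x = \<one>\<^bsub>exterior_square G\<^esub>"
    by blast
qed

lemma inv_ext_class:
  assumes "u \<in> lists (carrier G \<times> carrier G \<times> UNIV)"
  shows "inv\<^bsub>exterior_square G\<^esub> (ext_class G u) = ext_class G (inv_word u)"
proof (rule group.inv_equality[OF group_exterior_square])
  show "ext_class G (inv_word u) \<otimes>\<^bsub>exterior_square G\<^esub> ext_class G u = \<one>\<^bsub>exterior_square G\<^esub>"
    using ext_rel_inv_word by (simp add: ext_class_mult one_exterior_square ext_class_eq_iff)
qed (use assms in \<open>simp_all add: carrier_exterior_square inv_word_in_lists\<close>)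

lemma wedge_eq_ext_class: "wedge G a b = ext_class G [(a, b, True)]"
  by (simp add: wedge_def ext_class_def)

lemma wedge_closed:
  "a \<in> carrier G \<Longrightarrow> b \<in> carrier G \<Longrightarrow> wedge G a b \<in> carrier (exterior_square G)"
  by (auto simp: wedge_eq_ext_class carrier_exterior_square)

lemma exterior_square_generated:
  assumes "subgroup H (exterior_square G)"
    and "\<And>a b. a \<in> carrier G \<Longrightarrow> b \<in> carrier G \<Longrightarrow> wedge G a b \<in> H"
  shows "H = carrier (exterior_square G)"
proof -
  interpret H: subgroup H "exterior_square G" by fact
  have "u \<in> lists (carrier G \<times> carrier G \<times> UNIV) \<Longrightarrow> ext_class G u \<in> H" for u
  proof (induction u)
    case Nil
    then show ?case
      using H.one_closed by (simp add: one_exterior_square)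
  next
    case (Cons l u)
    obtain a b t where l: "l = (a, b, t)" by (cases l)
    have ab: "a \<in> carrier G" "b \<in> carrier G"
      using Cons.prems l by auto
    have "ext_class G [l] = wedge G a b \<or> ext_class G [l] = inv\<^bsub>exterior_square G\<^esub> (wedge G a b)"
      using ab by (cases t) (simp_all add: l wedge_eq_ext_class inv_ext_class inv_word_def)
    then have "ext_class G [l] \<in> H"
      using assms(2)[OF ab] by auto
    moreover have "ext_class G u \<in> H"
      using Cons by simp
    moreover have "ext_class G (l # u) = ext_class G [l] \<otimes>\<^bsub>exterior_square G\<^esub> ext_class G u"
      by (simp add: ext_class_mult)
    ultimately show ?case
      by simp
  qed
  then show ?thesis
    using H.subset by (auto simp: carrier_exterior_square)
qed

locale ext_square = group G for G (structure) +
  fixes E :: "('a \<times> 'a \<times> bool) list set monoid"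
  assumes E_def: "E = exterior_square G"
begin

sublocale E: group E
  unfolding E_def by (rule group_exterior_square)

lemma exterior_square_cases:
  assumes "t \<in> carrier E"
  obtains u where "u \<in> lists (carrier G \<times> carrier G \<times> UNIV)" "t = ext_class G u"
  using assms unfolding E_def carrier_exterior_square by blast

lemma ext_rel_conj_word:
  assumes "x \<in> carrier G" "ext_rel G u v"
  shows "ext_rel G (conj_word G x u) (conj_word G x v)"
  using assms(2)
proof (induction rule: ext_rel.induct)
  case (refl w)
  then show ?case by (rule ext_rel.refl)
next
  case (sym u v)
  from sym.IH show ?case by (rule ext_rel.sym)
next
  case (trans u v w)
  from trans.IH show ?case by (rule ext_rel.trans)
next
  case (cong u v a c)
  then show ?case by (simp add: conj_word_def ext_rel.cong)
next
  case (cancel a b t)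
  then show ?case by (simp add: conj_word_def ext_rel.cancel)
next
  case (rel_left g g' h)
  then have "ext_rel G [(gconj G x g \<otimes> gconj G x g', gconj G x h, True)]
      [(gconj G (gconj G x g) (gconj G x g'), gconj G (gconj G x g) (gconj G x h), True),
       (gconj G x g, gconj G x h, True)]"
    using assms(1) by (intro ext_rel.rel_left) simp_all
  with rel_left show ?case
    using assms(1) by (simp add: conj_word_def gconj_mult gconj_distrib_gconj[of x g])
next
  case (rel_right g h h')
  then have "ext_rel G [(gconj G x g, gconj G x h \<otimes> gconj G x h', True)]
      [(gconj G x g, gconj G x h, True),
       (gconj G (gconj G x h) (gconj G x g), gconj G (gconj G x h) (gconj G x h'), True)]"
    using assms(1) by (intro ext_rel.rel_right) simp_all
  with rel_right show ?case
    using assms(1) by (simp add: conj_word_def gconj_mult gconj_distrib_gconj[of x h])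
next
  case (rel_diag y)
  then show ?case
    using assms(1) by (simp add: conj_word_def ext_rel.rel_diag)
qed

lemma conj_word_in_lists:
  "x \<in> carrier G \<Longrightarrow> u \<in> lists (carrier G \<times> carrier G \<times> UNIV) \<Longrightarrow>
    conj_word G x u \<in> lists (carrier G \<times> carrier G \<times> UNIV)"
  by (induction u) (auto simp: conj_word_def)

lemma conj_word_conj_word:
  "x \<in> carrier G \<Longrightarrow> y \<in> carrier G \<Longrightarrow> u \<in> lists (carrier G \<times> carrier G \<times> UNIV) \<Longrightarrow>
    conj_word G x (conj_word G y u) = conj_word G (x \<otimes> y) u"
  by (induction u) (auto simp: conj_word_def gconj_gconj)

lemma conj_word_center:
  "z \<in> center G \<Longrightarrow> u \<in> lists (carrier G \<times> carrier G \<times> UNIV) \<Longrightarrow> conj_word G z u = u"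
  by (induction u) (auto simp: conj_word_def gconj_center)

lemma ext_act_ext_class:
  assumes "x \<in> carrier G"
  shows "ext_act G x (ext_class G u) = ext_class G (conj_word G x u)"
proof (rule equalityI; rule subsetI)
  fix v assume "v \<in> ext_act G x (ext_class G u)"
  then obtain u' where "ext_rel G u u'" "ext_rel G v (conj_word G x u')"
    by (auto simp: ext_act_def ext_class_def)
  then have "ext_rel G (conj_word G x u) v"
    using ext_rel_conj_word[OF assms] ext_rel.sym ext_rel.trans by metis
  then show "v \<in> ext_class G (conj_word G x u)"
    by (simp add: ext_class_def)
next
  fix v assume "v \<in> ext_class G (conj_word G x u)"
  then show "v \<in> ext_act G x (ext_class G u)"
    by (auto simp: ext_act_def ext_class_def intro: ext_rel.refl ext_rel.sym)
qed

lemma ext_act_hom: "x \<in> carrier G \<Longrightarrow> ext_act G x \<in> hom E E"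
proof (rule homI)
  fix t assume x: "x \<in> carrier G" and t: "t \<in> carrier E"
  from t obtain u where "u \<in> lists (carrier G \<times> carrier G \<times> UNIV)" "t = ext_class G u"
    by (rule exterior_square_cases)
  then show "ext_act G x t \<in> carrier E"
    using x by (simp add: E_def carrier_exterior_square ext_act_ext_class conj_word_in_lists)
next
  fix s t assume x: "x \<in> carrier G" and "s \<in> carrier E" "t \<in> carrier E"
  then obtain u v where "s = ext_class G u" "t = ext_class G v"
    by (metis exterior_square_cases)
  then show "ext_act G x (s \<otimes>\<^bsub>E\<^esub> t) = ext_act G x s \<otimes>\<^bsub>E\<^esub> ext_act G x t"
    using x by (simp add: E_def ext_act_ext_class ext_class_mult conj_word_def)
qed

lemma ext_act_closed [simp]: "x \<in> carrier G \<Longrightarrow> t \<in> carrier E \<Longrightarrow> ext_act G x t \<in> carrier E"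
  by (rule hom_in_carrier[OF ext_act_hom])

lemma ext_act_mult:
  "x \<in> carrier G \<Longrightarrow> s \<in> carrier E \<Longrightarrow> t \<in> carrier E \<Longrightarrow>
    ext_act G x (s \<otimes>\<^bsub>E\<^esub> t) = ext_act G x s \<otimes>\<^bsub>E\<^esub> ext_act G x t"
  by (rule hom_mult[OF ext_act_hom])

lemma ext_act_group_hom: "x \<in> carrier G \<Longrightarrow> group_hom E E (ext_act G x)"
  by (simp add: group_hom_def group_hom_axioms_def ext_act_hom)

lemma ext_act_inv:
  "x \<in> carrier G \<Longrightarrow> t \<in> carrier E \<Longrightarrow> ext_act G x (inv\<^bsub>E\<^esub> t) = inv\<^bsub>E\<^esub> (ext_act G x t)"
  by (rule group_hom.hom_inv[OF ext_act_group_hom])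

lemma ext_act_one: "x \<in> carrier G \<Longrightarrow> ext_act G x \<one>\<^bsub>E\<^esub> = \<one>\<^bsub>E\<^esub>"
  by (rule group_hom.hom_one[OF ext_act_group_hom])

lemma ext_act_ext_act:
  assumes "x \<in> carrier G" "y \<in> carrier G" "t \<in> carrier E"
  shows "ext_act G x (ext_act G y t) = ext_act G (x \<otimes> y) t"
proof -
  obtain u where "u \<in> lists (carrier G \<times> carrier G \<times> UNIV)" "t = ext_class G u"
    using assms(3) by (rule exterior_square_cases)
  then show ?thesis
    using assms by (simp add: ext_act_ext_class conj_word_conj_word)
qed

lemma ext_act_center:
  assumes "z \<in> center G" "t \<in> carrier E"
  shows "ext_act G z t = t"
proof -
  obtain u where "u \<in> lists (carrier G \<times> carrier G \<times> UNIV)" "t = ext_class G u"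
    using assms(2) by (rule exterior_square_cases)
  then show ?thesis
    using assms(1) by (simp add: ext_act_ext_class center_closed conj_word_center)
qed

lemma ext_act_wedge:
  "x \<in> carrier G \<Longrightarrow> ext_act G x (wedge G a b) = wedge G (gconj G x a) (gconj G x b)"
  by (simp add: wedge_eq_ext_class ext_act_ext_class conj_word_def)

section \<open>Crossed module identities in \<open>G \<wedge> G\<close>\<close>

lemma wedge_in_carrier [simp]: "a \<in> carrier G \<Longrightarrow> b \<in> carrier G \<Longrightarrow> wedge G a b \<in> carrier E"
  unfolding E_def by (rule wedge_closed)

lemma wedge_mult_left:
  assumes "g \<in> carrier G" "g' \<in> carrier G" "h \<in> carrier G"
  shows "wedge G (g \<otimes> g') h = ext_act G g (wedge G g' h) \<otimes>\<^bsub>E\<^esub> wedge G g h"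
  using ext_rel.rel_left[OF assms] assms
  by (simp add: E_def wedge_eq_ext_class ext_act_ext_class conj_word_def ext_class_mult
      ext_class_eq_iff)

lemma wedge_mult_right:
  assumes "g \<in> carrier G" "h \<in> carrier G" "h' \<in> carrier G"
  shows "wedge G g (h \<otimes> h') = wedge G g h \<otimes>\<^bsub>E\<^esub> ext_act G h (wedge G g h')"
  using ext_rel.rel_right[OF assms] assms
  by (simp add: E_def wedge_eq_ext_class ext_act_ext_class conj_word_def ext_class_mult
      ext_class_eq_iff)

lemma wedge_self: "x \<in> carrier G \<Longrightarrow> wedge G x x = \<one>\<^bsub>E\<^esub>"
  using ext_rel.rel_diag[of x G]
  by (simp add: E_def wedge_eq_ext_class one_exterior_square ext_class_eq_iff)

lemma ext_act_one_left: "t \<in> carrier E \<Longrightarrow> ext_act G \<one> t = t"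
  by (rule ext_act_center[OF one_in_center])

lemma wedge_one_left:
  assumes "m \<in> carrier G"
  shows "wedge G \<one> m = \<one>\<^bsub>E\<^esub>"
proof -
  have "wedge G \<one> m \<otimes>\<^bsub>E\<^esub> wedge G \<one> m = wedge G \<one> m"
    using wedge_mult_left[of \<one> \<one> m] assms
    by (metis l_one one_closed ext_act_one_left wedge_in_carrier)
  then show ?thesis
    using assms by simp
qed

lemma wedge_one_right:
  assumes "m \<in> carrier G"
  shows "wedge G m \<one> = \<one>\<^bsub>E\<^esub>"
proof -
  have "wedge G m \<one> \<otimes>\<^bsub>E\<^esub> wedge G m \<one> = wedge G m \<one>"
    using wedge_mult_right[of m \<one> \<one>] assms
    by (metis l_one one_closed ext_act_one_left wedge_in_carrier)
  then show ?thesis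
    using assms by simp
qed

lemma wedge_inv_left:
  assumes "g \<in> carrier G" "m \<in> carrier G"
  shows "wedge G (inv g) m = inv\<^bsub>E\<^esub> (ext_act G (inv g) (wedge G g m))"
proof -
  have "ext_act G (inv g) (wedge G g m) \<otimes>\<^bsub>E\<^esub> wedge G (inv g) m = wedge G (inv g \<otimes> g) m"
    using assms by (simp only: wedge_mult_left inv_closed)
  also have "\<dots> = \<one>\<^bsub>E\<^esub>"
    using assms by (simp add: wedge_one_left)
  finally show ?thesis
    using assms by (simp add: E.inv_equality_right)
qed

lemma wedge_swap:
  assumes a: "a \<in> carrier G" and b: "b \<in> carrier G"
  shows "wedge G b a = inv\<^bsub>E\<^esub> (wedge G a b)"
proof -
  have "ext_act G a (wedge G b a \<otimes>\<^bsub>E\<^esub> wedge G a b)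
      = ext_act G a (wedge G b a \<otimes>\<^bsub>E\<^esub> ext_act G a (wedge G b b))
        \<otimes>\<^bsub>E\<^esub> (wedge G a a \<otimes>\<^bsub>E\<^esub> ext_act G a (wedge G a b))"
    using a b by (simp add: wedge_self ext_act_one ext_act_mult)
  also have "\<dots> = ext_act G a (wedge G b (a \<otimes> b)) \<otimes>\<^bsub>E\<^esub> wedge G a (a \<otimes> b)"
    using a b by (simp add: wedge_mult_right)
  also have "\<dots> = wedge G (a \<otimes> b) (a \<otimes> b)"
    using a b by (simp add: wedge_mult_left)
  also have "\<dots> = \<one>\<^bsub>E\<^esub>"
    using a b by (simp add: wedge_self)
  finally have "ext_act G (inv a) (ext_act G a (wedge G b a \<otimes>\<^bsub>E\<^esub> wedge G a b)) = \<one>\<^bsub>E\<^esub>"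
    using a by (simp add: ext_act_one)
  then have "wedge G b a \<otimes>\<^bsub>E\<^esub> wedge G a b = \<one>\<^bsub>E\<^esub>"
    using a b by (simp add: ext_act_ext_act ext_act_one_left)
  then show ?thesis
    using a b by (simp add: E.inv_equality)
qed

text \<open>Expanding \<open>gg' \<wedge> hh'\<close> by the two defining relations in either order.\<close>

lemma ext_act_wedge_commute:
  assumes "g \<in> carrier G" "h \<in> carrier G" "g' \<in> carrier G" "h' \<in> carrier G"
  shows "ext_act G (g \<otimes> h) (wedge G g' h') \<otimes>\<^bsub>E\<^esub> wedge G g h
    = wedge G g h \<otimes>\<^bsub>E\<^esub> ext_act G (h \<otimes> g) (wedge G g' h')"
proof -
  define A where "A = ext_act G g (wedge G g' h)"
  define D where "D = ext_act G h (wedge G g h')"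
  have AD: "A \<in> carrier E" "D \<in> carrier E"
    unfolding A_def D_def using assms by simp_all
  have "wedge G (g \<otimes> g') (h \<otimes> h')
      = ext_act G g (wedge G g' (h \<otimes> h')) \<otimes>\<^bsub>E\<^esub> wedge G g (h \<otimes> h')"
    using assms by (simp add: wedge_mult_left)
  also have "\<dots> = A \<otimes>\<^bsub>E\<^esub> (ext_act G (g \<otimes> h) (wedge G g' h') \<otimes>\<^bsub>E\<^esub> wedge G g h) \<otimes>\<^bsub>E\<^esub> D"
    using assms
    by (simp add: A_def D_def wedge_mult_right ext_act_mult ext_act_ext_act E.m_assoc)
  finally have expand1: "wedge G (g \<otimes> g') (h \<otimes> h')
      = A \<otimes>\<^bsub>E\<^esub> (ext_act G (g \<otimes> h) (wedge G g' h') \<otimes>\<^bsub>E\<^esub> wedge G g h) \<otimes>\<^bsub>E\<^esub> D" .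
  have "wedge G (g \<otimes> g') (h \<otimes> h')
      = wedge G (g \<otimes> g') h \<otimes>\<^bsub>E\<^esub> ext_act G h (wedge G (g \<otimes> g') h')"
    using assms by (simp add: wedge_mult_right)
  also have "\<dots> = A \<otimes>\<^bsub>E\<^esub> (wedge G g h \<otimes>\<^bsub>E\<^esub> ext_act G (h \<otimes> g) (wedge G g' h')) \<otimes>\<^bsub>E\<^esub> D"
    using assms
    by (simp add: A_def D_def wedge_mult_left ext_act_mult ext_act_ext_act E.m_assoc)
  finally have "A \<otimes>\<^bsub>E\<^esub> (ext_act G (g \<otimes> h) (wedge G g' h') \<otimes>\<^bsub>E\<^esub> wedge G g h) \<otimes>\<^bsub>E\<^esub> D
      = A \<otimes>\<^bsub>E\<^esub> (wedge G g h \<otimes>\<^bsub>E\<^esub> ext_act G (h \<otimes> g) (wedge G g' h')) \<otimes>\<^bsub>E\<^esub> D"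
    unfolding expand1 .
  then show ?thesis
    using AD assms by (metis E.m_closed E.right_cancel E.Units_eq E.Units_l_cancel ext_act_closed
        m_closed wedge_in_carrier)
qed

lemma wedge_mult_wedge:
  assumes g: "g \<in> carrier G" and h: "h \<in> carrier G" and "a \<in> carrier G" "b \<in> carrier G"
  shows "wedge G g h \<otimes>\<^bsub>E\<^esub> wedge G a b = ext_act G (gcomm G g h) (wedge G a b) \<otimes>\<^bsub>E\<^esub> wedge G g h"
proof -
  define k where "k = h \<otimes> g"
  define t where "t = wedge G (gconj G (inv k) a) (gconj G (inv k) b)"
  have k: "k \<in> carrier G" and t: "t \<in> carrier E"
    using assms by (simp_all add: k_def t_def)
  have kt: "ext_act G k t = wedge G a b"
    using assms k by (simp add: t_def ext_act_wedge gconj_gconj_inv)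
  have "gcomm G g h \<otimes> k = g \<otimes> h"
    using g h by (simp add: k_def group_word_simps)
  then have "ext_act G (g \<otimes> h) t = ext_act G (gcomm G g h) (wedge G a b)"
    using g h k t by (simp flip: kt add: ext_act_ext_act)
  with ext_act_wedge_commute[of g h "gconj G (inv k) a" "gconj G (inv k) b"] show ?thesis
    using assms k by (simp add: t_def [symmetric] kt [unfolded k_def])
qed

lemma wedge_mult_conj:
  assumes g: "g \<in> carrier G" and h: "h \<in> carrier G" and t: "t \<in> carrier E"
  shows "wedge G g h \<otimes>\<^bsub>E\<^esub> t = ext_act G (gcomm G g h) t \<otimes>\<^bsub>E\<^esub> wedge G g h"
proof -
  let ?H = "{t \<in> carrier E. wedge G g h \<otimes>\<^bsub>E\<^esub> t = ext_act G (gcomm G g h) t \<otimes>\<^bsub>E\<^esub> wedge G g h}"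
  have "subgroup ?H E"
    using g h by (intro E.subgroup_twisted_centralizer ext_act_group_hom) simp_all
  moreover have "wedge G a b \<in> ?H" if "a \<in> carrier G" "b \<in> carrier G" for a b
    using g h that by (simp add: wedge_mult_wedge)
  ultimately have "?H = carrier E"
    unfolding E_def by (rule exterior_square_generated)
  then show ?thesis
    using t by blast
qed

lemma ext_act_gcomm:
  "g \<in> carrier G \<Longrightarrow> h \<in> carrier G \<Longrightarrow> t \<in> carrier E \<Longrightarrow>
    ext_act G (gcomm G g h) t = wedge G g h \<otimes>\<^bsub>E\<^esub> t \<otimes>\<^bsub>E\<^esub> inv\<^bsub>E\<^esub> (wedge G g h)"
  by (simp add: wedge_mult_conj E.m_assoc)

lemma ext_act_gcomm_wedge:
  "g \<in> carrier G \<Longrightarrow> h \<in> carrier G \<Longrightarrow> ext_act G (gcomm G g h) (wedge G g h) = wedge G g h"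
  by (simp add: ext_act_gcomm E.m_assoc)

lemma ext_act_wedge_self:
  assumes "g \<in> carrier G" "c \<in> carrier G"
  shows "ext_act G g (wedge G g c) = wedge G g (gcomm G g c) \<otimes>\<^bsub>E\<^esub> wedge G g c"
proof -
  have "ext_act G g (wedge G g c) = wedge G g (gcomm G g c \<otimes> c)"
    using assms by (simp add: ext_act_wedge group_word_simps)
  also have "\<dots> = wedge G g (gcomm G g c) \<otimes>\<^bsub>E\<^esub> wedge G g c"
    using assms by (simp add: wedge_mult_right ext_act_gcomm_wedge)
  finally show ?thesis .
qed

text \<open>Write \<open>[g, h] = g \<^sup>h(g\<^sup>-\<^sup>1)\<close> and compare the two expansions of \<open>g \<wedge> hm = g \<wedge> kh\<close>,
  where \<open>m = \<^sup>h\<^sup>-\<^sup>1k\<close>.\<close>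

lemma wedge_gcomm_left:
  assumes g: "g \<in> carrier G" and h: "h \<in> carrier G" and k: "k \<in> carrier G"
  shows "wedge G (gcomm G g h) k = wedge G g h \<otimes>\<^bsub>E\<^esub> inv\<^bsub>E\<^esub> (ext_act G k (wedge G g h))"
proof -
  define s where "s = wedge G g h"
  define m where "m = gconj G (inv h) k"
  have s: "s \<in> carrier E" and m: "m \<in> carrier G"
    using assms by (simp_all add: s_def m_def)
  have "s \<otimes>\<^bsub>E\<^esub> ext_act G h (wedge G g m) = wedge G g (h \<otimes> m)"
    using assms m by (simp add: s_def wedge_mult_right)
  also have "h \<otimes> m = k \<otimes> h"
    using assms by (simp add: m_def group_word_simps)
  also have "wedge G g (k \<otimes> h) = wedge G g k \<otimes>\<^bsub>E\<^esub> ext_act G k s"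
    using assms by (simp add: s_def wedge_mult_right)
  finally have hm: "ext_act G h (wedge G g m) = inv\<^bsub>E\<^esub> s \<otimes>\<^bsub>E\<^esub> (wedge G g k \<otimes>\<^bsub>E\<^esub> ext_act G k s)"
    using assms m s by (simp add: E.inv_solve_left)
  have "g \<otimes> h \<otimes> inv g = gcomm G g h \<otimes> h"
    using g h by (simp add: group_word_simps)
  then have "ext_act G (g \<otimes> h \<otimes> inv g) (wedge G g m)
      = ext_act G (gcomm G g h) (ext_act G h (wedge G g m))"
    using assms m by (simp add: ext_act_ext_act)
  also have "\<dots> = wedge G g k \<otimes>\<^bsub>E\<^esub> ext_act G k s \<otimes>\<^bsub>E\<^esub> inv\<^bsub>E\<^esub> s"
    using assms m s by (simp add: ext_act_gcomm hm s_def [symmetric] E.m_assoc)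
  finally have conj: "ext_act G (g \<otimes> h \<otimes> inv g) (wedge G g m)
      = wedge G g k \<otimes>\<^bsub>E\<^esub> ext_act G k s \<otimes>\<^bsub>E\<^esub> inv\<^bsub>E\<^esub> s" .
  have "gcomm G g h = g \<otimes> gconj G h (inv g)"
    using g h by (simp add: group_word_simps)
  then have "wedge G (gcomm G g h) k
      = ext_act G g (wedge G (gconj G h (inv g)) k) \<otimes>\<^bsub>E\<^esub> wedge G g k"
    using assms by (simp add: wedge_mult_left)
  also have "wedge G (gconj G h (inv g)) k = ext_act G h (wedge G (inv g) m)"
    using assms by (simp add: m_def ext_act_wedge gconj_gconj_inv)
  also have "ext_act G g (ext_act G h (wedge G (inv g) m))
      = inv\<^bsub>E\<^esub> (ext_act G (g \<otimes> h \<otimes> inv g) (wedge G g m))"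
    using assms m by (simp add: wedge_inv_left ext_act_inv ext_act_ext_act m_assoc)
  finally show ?thesis
    using assms m s by (simp add: conj E.inv_mult_group E.m_assoc s_def)
qed

lemma wedge_gcomm_right:
  "g \<in> carrier G \<Longrightarrow> h \<in> carrier G \<Longrightarrow> k \<in> carrier G \<Longrightarrow>
    wedge G k (gcomm G g h) = ext_act G k (wedge G g h) \<otimes>\<^bsub>E\<^esub> inv\<^bsub>E\<^esub> (wedge G g h)"
  by (simp add: wedge_swap [of "gcomm G g h" k] wedge_gcomm_left E.inv_mult_group)

lemma gcomm_wedge:
  assumes "a \<in> carrier G" "b \<in> carrier G" "c \<in> carrier G" "d \<in> carrier G"
  shows "gcomm E (wedge G a b) (wedge G c d) = wedge G (gcomm G a b) (gcomm G c d)"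
  using assms by (simp add: gcomm_def [of E] wedge_gcomm_right ext_act_gcomm)

lemma wedge_in_center:
  assumes "a \<in> carrier G" "b \<in> carrier G" "gcomm G a b \<in> center G"
  shows "wedge G a b \<in> center E"
  using assms by (simp add: center_def wedge_mult_conj ext_act_center)

lemma wedge_center_gcomm:
  "z \<in> center G \<Longrightarrow> g \<in> carrier G \<Longrightarrow> h \<in> carrier G \<Longrightarrow> wedge G z (gcomm G g h) = \<one>\<^bsub>E\<^esub>"
  by (simp add: wedge_gcomm_right ext_act_center center_closed)

lemma wedge_pow_left:
  assumes "g \<in> carrier G" "h \<in> carrier G"
  shows "wedge G (g [^] n) h = twisted_pow E (ext_act G g) (wedge G g h) n"
proof (induction n)
  case 0
  then show ?case using assms by (simp add: wedge_one_left)
next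
  case (Suc n)
  have "wedge G (g [^] Suc n) h = wedge G (g \<otimes> g [^] n) h"
    using assms by (simp only: nat_pow_Suc2)
  also have "\<dots> = ext_act G g (wedge G (g [^] n) h) \<otimes>\<^bsub>E\<^esub> wedge G g h"
    using assms by (simp add: wedge_mult_left)
  finally show ?case by (simp add: Suc.IH)
qed

end

section \<open>Groups of class 5\<close>

lemma (in group) class5_commutators:
  assumes lc: "lower_central G 5 = {\<one>}" and g: "g \<in> carrier G" and h: "h \<in> carrier G"
    and c1_def: "c1 = gcomm G g h" and c2_def: "c2 = gcomm G g c1" and c3_def: "c3 = gcomm G g c2"
    and c4_def: "c4 = gcomm G g c3"
  shows "c4 \<in> center G" "gcomm G g c4 = \<one>" "gcomm G c1 c2 \<in> center G" "gcomm G c1 c3 = \<one>"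
proof -
  have c1: "c1 \<in> lower_central G 1"
    using gcomm_in_lower_central [OF g, of h 0] h by (simp add: c1_def)
  have c2: "c2 \<in> lower_central G 2"
    using gcomm_in_lower_central [OF g c1] by (simp add: c2_def numeral_2_eq_2)
  have c3: "c3 \<in> lower_central G 3"
    using gcomm_in_lower_central [OF g c2] by (simp add: c3_def eval_nat_numeral)
  have c4: "c4 \<in> lower_central G 4"
    using gcomm_in_lower_central [OF g c3] by (simp add: c4_def eval_nat_numeral)
  show "c4 \<in> center G"
    unfolding upper_central_1 [symmetric] using lower_central_subset_upper_central [of 4 1] lc c4
    by (auto simp del: lower_central.simps)
  show "gcomm G g c4 = \<one>"
    using gcomm_in_lower_central [OF g c4] lc
    by (simp add: eval_nat_numeral del: lower_central.simps)
  have "c2 \<in> upper_central G 3"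
    using lower_central_subset_upper_central [of 2 3] lc c2 by (auto simp del: lower_central.simps)
  then have "c2 \<in> upper_central G (Suc (Suc 1))"
    by (simp only: numeral_3_eq_3 One_nat_def)
  then show "gcomm G c1 c2 \<in> center G"
    unfolding upper_central_1 [symmetric] c1_def using g h by (rule gcomm_gcomm_upper_central)
  have "c3 \<in> upper_central G 2"
    using lower_central_subset_upper_central [of 3 2] lc c3 by (auto simp del: lower_central.simps)
  then have "c3 \<in> upper_central G (Suc (Suc 0))"
    by (simp only: numeral_2_eq_2)
  then show "gcomm G c1 c3 = \<one>"
    using gcomm_gcomm_upper_central [of c3 0 g h] g h by (simp add: c1_def)
qed

context ext_square
begin

lemma twisted_binomial_wedge:
  assumes lc: "lower_central G 5 = {\<one>}" and g: "g \<in> carrier G" and h: "h \<in> carrier G"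
    and c1_def: "c1 = gcomm G g h" and c2_def: "c2 = gcomm G g c1" and c3_def: "c3 = gcomm G g c2"
    and c4_def: "c4 = gcomm G g c3"
  shows "twisted_binomial E (ext_act G g) (wedge G g h) (wedge G g c1) (wedge G g c2)
    (wedge G g c3) (wedge G g c4) (wedge G c1 c2) (wedge G c1 c3)"
proof -
  note class5 = class5_commutators [OF lc g h c1_def c2_def c3_def c4_def]
  have c: "c1 \<in> carrier G" "c2 \<in> carrier G" "c3 \<in> carrier G" "c4 \<in> carrier G"
    using g h by (simp_all add: c1_def c2_def c3_def c4_def)
  have "c3 \<otimes> c1 = c1 \<otimes> c3"
    using class5(4) c by (simp add: gcomm_eq_one_iff)
  then have "gconj G c3 c1 = c1"
    using c by (simp add: gconj_def m_assoc)
  moreover have "gconj G c3 g = inv c4 \<otimes> g"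
    using g c by (simp add: c4_def group_word_simps)
  ultimately have "ext_act G c3 (wedge G g c1) = wedge G (inv c4 \<otimes> g) c1"
    using c by (simp add: ext_act_wedge)
  also have "\<dots> = wedge G g c1"
    using g h c center_inv [OF class5(1)]
    by (simp add: wedge_mult_left ext_act_center c1_def wedge_center_gcomm)
  finally have "wedge G c3 c2 = \<one>\<^bsub>E\<^esub>"
    using g c by (simp add: c2_def wedge_gcomm_right)
  then have x1_x2: "gcomm E (wedge G g c1) (wedge G g c2) = \<one>\<^bsub>E\<^esub>"
    using g c by (simp add: gcomm_wedge c2_def [symmetric] c3_def [symmetric] wedge_swap [of c3 c2])
  show ?thesis
  proof
    show "ext_act G g (wedge G g c4) = wedge G g c4"
      using g c class5(2) by (simp add: ext_act_wedge_self wedge_one_right)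
  qed (use g h c class5 x1_x2 in \<open>simp_all add: ext_act_group_hom ext_act_wedge_self
    wedge_in_center one_in_center gcomm_wedge c1_def c2_def c3_def c4_def\<close>)
qed

end

theorem theorem3p3:
  fixes G (structure) and g h :: 'a and n :: nat
  assumes "group G" and "nilpotent_of_class G 5"
    and "g \<in> carrier G" and "h \<in> carrier G"
  shows "wedge G (g [^] n) h =
     (wedge G (gcomm G g h) (gcomm G g (gcomm G g (gcomm G g h)))) [^]\<^bsub>exterior_square G\<^esub> (n choose 4)
     \<otimes>\<^bsub>exterior_square G\<^esub> (wedge G (gcomm G g h) (gcomm G g (gcomm G g h))) [^]\<^bsub>exterior_square G\<^esub> (n choose 3)
     \<otimes>\<^bsub>exterior_square G\<^esub> (wedge G g (gcomm G g (gcomm G g (gcomm G g (gcomm G g h))))) [^]\<^bsub>exterior_square G\<^esub> (n choose 5)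
     \<otimes>\<^bsub>exterior_square G\<^esub> (wedge G g (gcomm G g (gcomm G g (gcomm G g h)))) [^]\<^bsub>exterior_square G\<^esub> (n choose 4)
     \<otimes>\<^bsub>exterior_square G\<^esub> (wedge G g (gcomm G g (gcomm G g h))) [^]\<^bsub>exterior_square G\<^esub> (n choose 3)
     \<otimes>\<^bsub>exterior_square G\<^esub> (wedge G g (gcomm G g h)) [^]\<^bsub>exterior_square G\<^esub> (n choose 2)
     \<otimes>\<^bsub>exterior_square G\<^esub> (wedge G g h) [^]\<^bsub>exterior_square G\<^esub> n"
proof -
  interpret ext_square G "exterior_square G"
    by (simp add: ext_square_def ext_square_axioms_def assms(1))
  have "lower_central G 5 = {\<one>}"
    using assms(2) by (simp add: nilpotent_of_class_def)
  then have "twisted_binomial (exterior_square G) (ext_act G g) (wedge G g h)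
      (wedge G g (gcomm G g h)) (wedge G g (gcomm G g (gcomm G g h)))
      (wedge G g (gcomm G g (gcomm G g (gcomm G g h))))
      (wedge G g (gcomm G g (gcomm G g (gcomm G g (gcomm G g h)))))
      (wedge G (gcomm G g h) (gcomm G g (gcomm G g h)))
      (wedge G (gcomm G g h) (gcomm G g (gcomm G g (gcomm G g h))))"
    using assms(3,4) by (rule twisted_binomial_wedge) (rule HOL.refl)+
  then show ?thesis
    unfolding wedge_pow_left [OF assms(3,4)] by (rule twisted_binomial.twisted_pow_binomial)
qed

end
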